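(* Let $\mathbb{X}$ be a two-dimensional real Banach space. Suppose that every $T\in\mathbb{L}(\mathbb{X})$ with $\|T\|=1$ which attains its norm at (at least) two linearly independent vectors is an extreme contraction. Then $\mathbb{X}$ is strictly convex.
   Context: $T$ attains its norm at $u$ if $\|u\|=1$ and $\|Tu\|=\|T\|$. An extreme contraction is a norm one operator that is an extreme point of the closed unit ball of $\mathbb{L}(\mathbb{X})$. *)

theory Defs
  imports "HOL-Analysis.Analysis"
begin

definition strictly_convex_space :: "'a::real_normed_vector itself \<Rightarrow> bool" where
  "strictly_convex_space _ \<longleftrightarrow>
     (\<forall>x y::'a. norm x = 1 \<and> norm y = 1 \<and> x \<noteq> y \<longrightarrow>
        (\<forall>t::real. 0 < t \<and> t < 1 \<longrightarrow> norm ((1 - t) *\<^sub>R x + t *\<^sub>R y) < 1))"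

definition attains_norm_at :: "('a::real_normed_vector \<Rightarrow>\<^sub>L 'a) \<Rightarrow> 'a \<Rightarrow> bool" where
  "attains_norm_at T u \<longleftrightarrow> norm u = 1 \<and> norm (blinfun_apply T u) = norm T"

definition extreme_contraction :: "('a::real_normed_vector \<Rightarrow>\<^sub>L 'a) \<Rightarrow> bool" where
  "extreme_contraction T \<longleftrightarrow> norm T = 1 \<and> T extreme_point_of (cball 0 1)"

end

theory Submission
  imports Defs
begin

text \<open>If the unit sphere contains a segment from x to y, then x and y are independent and, in
  dimension two, the linear functional f with f x = f y = 1 has norm one, because a point of the
  unit ball with f > 1 would push the segment off the sphere.  The rank-one operator u \<mapsto> f u z, with z an interior
  point of the segment, has norm one and attains it at x and y, so by hypothesis it is an extreme
  contraction; but it is the corresponding convex combination of the operators u \<mapsto> f u x and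
  u \<mapsto> f u y, which lie in the unit ball.\<close>

lemma not_strictly_convex_space_obtains_segment:
  assumes "\<not> strictly_convex_space TYPE('a)"
  obtains x y :: "'a::real_normed_vector" and t :: real
  where "norm x = 1" "norm y = 1" "x \<noteq> y" "0 < t" "t < 1"
    "norm ((1 - t) *\<^sub>R x + t *\<^sub>R y) = 1"
proof -
  obtain x y :: 'a and t :: real where xy: "norm x = 1" "norm y = 1" "x \<noteq> y"
    and t: "0 < t" "t < 1" and not_lt: "\<not> norm ((1 - t) *\<^sub>R x + t *\<^sub>R y) < 1"
    using assms unfolding strictly_convex_space_def by blast
  have "norm ((1 - t) *\<^sub>R x + t *\<^sub>R y) \<le> norm ((1 - t) *\<^sub>R x) + norm (t *\<^sub>R y)"
    by (rule norm_triangle_ineq)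
  also have "\<dots> = 1" using xy t by simp
  finally show ?thesis using that xy t not_lt by simp
qed

text \<open>Otherwise, for small g > 0 and c = 1 + g (a + b - 1) > 1, the vector c z, with z the
  point of the segment, is a combination of x, y and w = a x + b y with nonnegative coefficients
  summing to 1, so its norm would be at most 1.\<close>

lemma segment_on_sphere_coeff_sum_le_one:
  fixes x y :: "'a::real_normed_vector" and t a b :: real
  assumes nx: "norm x = 1" and ny: "norm y = 1"
    and t: "0 < t" "t < 1"
    and nz: "norm ((1 - t) *\<^sub>R x + t *\<^sub>R y) = 1"
    and nw: "norm (a *\<^sub>R x + b *\<^sub>R y) \<le> 1"
  shows "a + b \<le> 1"
proof (rule ccontr)
  assume "\<not> a + b \<le> 1"
  define w where "w = a *\<^sub>R x + b *\<^sub>R y"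
  define g where "g = min ((1 - t) / (\<bar>a\<bar> + 1)) (t / (\<bar>b\<bar> + 1))"
  define c where "c = 1 + g * (a + b - 1)"
  define \<alpha> where "\<alpha> = c * (1 - t) - g * a"
  define \<beta> where "\<beta> = c * t - g * b"
  have g0: "g > 0" using t by (simp add: g_def)
  have c1: "c > 1" using g0 \<open>\<not> a + b \<le> 1\<close> by (simp add: c_def)
  have "g \<le> (1 - t) / (\<bar>a\<bar> + 1)" "g \<le> t / (\<bar>b\<bar> + 1)" by (simp_all add: g_def)
  then have "g * \<bar>a\<bar> + g \<le> 1 - t" "g * \<bar>b\<bar> + g \<le> t"
    by (simp_all add: pos_le_divide_eq add_pos_nonneg algebra_simps)
  moreover have "g * a \<le> g * \<bar>a\<bar>" "g * b \<le> g * \<bar>b\<bar>"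
    using g0 by (auto intro!: mult_left_mono)
  moreover have "1 - t \<le> c * (1 - t)" "t \<le> c * t" using c1 t by simp_all
  ultimately have \<alpha>0: "\<alpha> \<ge> 0" and \<beta>0: "\<beta> \<ge> 0"
    using g0 unfolding \<alpha>_def \<beta>_def by linarith+
  have "c = norm (c *\<^sub>R ((1 - t) *\<^sub>R x + t *\<^sub>R y))" using c1 nz by simp
  also have "c *\<^sub>R ((1 - t) *\<^sub>R x + t *\<^sub>R y) = \<alpha> *\<^sub>R x + \<beta> *\<^sub>R y + g *\<^sub>R w"
    by (simp add: \<alpha>_def \<beta>_def w_def algebra_simps)
  also have "norm \<dots> \<le> norm (\<alpha> *\<^sub>R x) + norm (\<beta> *\<^sub>R y) + norm (g *\<^sub>R w)"
    by (meson norm_triangle_le order_refl add_mono)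
  also have "\<dots> \<le> \<alpha> + \<beta> + g" using \<alpha>0 \<beta>0 g0 nx ny nw by (simp add: w_def mult_left_le)
  also have "\<dots> = 1" by (simp add: \<alpha>_def \<beta>_def c_def algebra_simps)
  finally show False using c1 by simp
qed

lemma segment_on_sphere_independent:
  fixes x y :: "'a::real_normed_vector"
  assumes nx: "norm x = 1" and ny: "norm y = 1" and xy: "x \<noteq> y"
    and t: "0 < t" "t < 1" and nz: "norm ((1 - t) *\<^sub>R x + t *\<^sub>R y) = 1"
  shows "independent {x, y}"
proof -
  have "x \<notin> span {y}"
  proof
    assume "x \<in> span {y}"
    then obtain k where k: "x = k *\<^sub>R y" by (auto simp: real_vector.span_singleton)
    then have "k = 1 \<or> k = -1" using nx ny by (simp add: abs_if split: if_splits)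
    moreover have "k \<noteq> 1" using k xy by auto
    ultimately have "(1 - t) *\<^sub>R x + t *\<^sub>R y = (2 * t - 1) *\<^sub>R y"
      using k by (simp add: algebra_simps flip: scaleR_2)
    then show False using nz ny t by simp
  qed
  moreover have "y \<noteq> 0" using ny by auto
  ultimately show ?thesis by (simp add: real_vector.independent_insert)
qed

lemma span_eq_UNIV_if_card_eq_dim:
  fixes B :: "'a::real_vector set"
  assumes indep: "independent B" and card: "card B = dim (UNIV :: 'a set)" and "B \<noteq> {}"
    and fin: "finite B"
  shows "span B = UNIV"
proof -
  define E where "E = real_vector.extend_basis B"
  have spanE: "span E = UNIV" and indepE: "independent E" and BE: "B \<subseteq> E"
    using indep by (simp_all add: E_def real_vector.span_extend_basis
        real_vector.independent_extend_basis real_vector.extend_basis_superset)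
  have "card E = dim (UNIV :: 'a set)"
    using real_vector.basis_card_eq_dim[of E UNIV] spanE indepE by simp
  then have "finite E"
    using card fin \<open>B \<noteq> {}\<close> by (metis card_gt_0_iff)
  then have "B = E" using card_subset_eq[OF _ BE] card \<open>card E = _\<close> by simp
  then show ?thesis using spanE by simp
qed

lemma segment_on_sphere_norming_functional:
  fixes x y :: "'a::real_normed_vector"
  assumes dim2: "dim (UNIV :: 'a set) = 2"
    and nx: "norm x = 1" and ny: "norm y = 1" and xy: "x \<noteq> y"
    and t: "0 < t" "t < 1" and nz: "norm ((1 - t) *\<^sub>R x + t *\<^sub>R y) = 1"
  obtains f :: "'a \<Rightarrow>\<^sub>L real" where "f x = 1" "f y = 1" "\<And>u. \<bar>f u\<bar> \<le> norm u"
proof -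
  have indep: "independent {x, y}" using segment_on_sphere_independent[OF assms(2-)] .
  have span: "span {x, y} = UNIV"
    using span_eq_UNIV_if_card_eq_dim[OF indep] dim2 xy by simp
  obtain f :: "'a \<Rightarrow> real" where lf: "linear f" and fxy: "\<forall>v\<in>{x, y}. f v = 1"
    using real_vector.linear_independent_extend[OF indep, of "\<lambda>_. 1"] by blast
  have coords: "\<exists>a b. u = a *\<^sub>R x + b *\<^sub>R y" for u
  proof -
    have "u \<in> span (insert x {y})" using span by simp
    then obtain a b where "u - a *\<^sub>R x = b *\<^sub>R y"
      by (auto simp: real_vector.span_breakdown_eq real_vector.span_singleton)
    then show ?thesis by (metis add_diff_cancel_left' diff_add_cancel)
  qed
  have f_le: "f w \<le> 1" if "norm w \<le> 1" for w
  proof -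
    obtain a b where w: "w = a *\<^sub>R x + b *\<^sub>R y" using coords by blast
    have "a + b \<le> 1"
      using segment_on_sphere_coeff_sum_le_one[OF nx ny t nz] that w by simp
    then show ?thesis using w fxy lf by (simp add: linear_add linear_scale)
  qed
  have f_bound: "\<bar>f u\<bar> \<le> norm u" for u
  proof (cases "u = 0")
    case True
    then show ?thesis using lf by (simp add: linear_0)
  next
    case False
    define w where "w = (1 / norm u) *\<^sub>R u"
    have "norm w = 1" "norm (- w) = 1" using False by (simp_all add: w_def)
    then have "f w \<le> 1" "- f w \<le> 1" using f_le lf by (simp_all flip: linear_neg)
    then have "\<bar>f w\<bar> \<le> 1" by simp
    moreover have "f w = f u / norm u" using lf by (simp add: w_def linear_scale)
    ultimately show ?thesis using False by (simp add: abs_div divide_le_eq)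
  qed
  have "bounded_linear f"
    using lf f_bound by (intro bounded_linear_intro[where K = 1])
      (auto simp: linear_add linear_scale)
  then show ?thesis
    using that[of "Blinfun f"] fxy f_bound by (simp add: bounded_linear_Blinfun_apply)
qed

definition rank_one :: "('a::real_normed_vector \<Rightarrow>\<^sub>L real) \<Rightarrow> 'b::real_normed_vector \<Rightarrow> 'a \<Rightarrow>\<^sub>L 'b"
  where "rank_one f v = blinfun_scaleR_left v o\<^sub>L f"

lemma rank_one_apply [simp]: "rank_one f v u = f u *\<^sub>R v"
  by (simp add: rank_one_def)

lemma norm_rank_one_le:
  fixes f :: "'a::real_normed_vector \<Rightarrow>\<^sub>L real"
  assumes "\<And>u. \<bar>f u\<bar> \<le> norm u"
  shows "norm (rank_one f v) \<le> norm v"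
proof (rule norm_blinfun_bound)
  show "norm (rank_one f v u) \<le> norm v * norm u" for u
    using mult_right_mono[OF assms norm_ge_zero, of u v] by (simp add: mult.commute)
qed simp

lemma rank_one_convex_combination:
  "rank_one f ((1 - t) *\<^sub>R x + t *\<^sub>R y) = (1 - t) *\<^sub>R rank_one f x + t *\<^sub>R rank_one f y"
  by (rule blinfun_eqI)
    (simp add: blinfun.add_left blinfun.diff_left blinfun.scaleR_left algebra_simps)

lemma rank_one_not_extreme_point:
  fixes f :: "'a::real_normed_vector \<Rightarrow>\<^sub>L real" and x y :: "'b::real_normed_vector"
  assumes f_bound: "\<And>u. \<bar>f u\<bar> \<le> norm u" and "f \<noteq> 0"
    and "norm x \<le> 1" "norm y \<le> 1" "x \<noteq> y" "0 < t" "t < 1"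
  shows "\<not> rank_one f ((1 - t) *\<^sub>R x + t *\<^sub>R y) extreme_point_of cball 0 1"
proof -
  obtain u where "f u \<noteq> 0" using \<open>f \<noteq> 0\<close> by (metis blinfun_eqI zero_blinfun.rep_eq)
  then have "rank_one f x \<noteq> rank_one f y" using \<open>x \<noteq> y\<close> by (metis rank_one_apply scaleR_left_imp_eq)
  then have "rank_one f ((1 - t) *\<^sub>R x + t *\<^sub>R y) \<in> open_segment (rank_one f x) (rank_one f y)"
    using \<open>0 < t\<close> \<open>t < 1\<close> by (auto simp: in_segment rank_one_convex_combination)
  moreover have "rank_one f x \<in> cball 0 1" "rank_one f y \<in> cball 0 1"
    using norm_rank_one_le[OF f_bound] assms(3,4) by (auto intro: order_trans)
  ultimately show ?thesis unfolding extreme_point_of_def by blast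
qed

theorem mainTheorem18:
  assumes dim2: "dim (UNIV :: 'a::banach set) = 2"
    and hyp: "\<forall>T :: 'a \<Rightarrow>\<^sub>L 'a. norm T = 1 \<and>
               (\<exists>u v. attains_norm_at T u \<and> attains_norm_at T v \<and> u \<noteq> v \<and> independent {u, v})
               \<longrightarrow> extreme_contraction T"
  shows "strictly_convex_space TYPE('a)"
proof (rule ccontr)
  assume "\<not> strictly_convex_space TYPE('a)"
  then obtain x y :: 'a and t where seg: "norm x = 1" "norm y = 1" "x \<noteq> y" "0 < t" "t < 1"
    and nz: "norm ((1 - t) *\<^sub>R x + t *\<^sub>R y) = 1"
    by (rule not_strictly_convex_space_obtains_segment)
  obtain f :: "'a \<Rightarrow>\<^sub>L real"
    where fx: "f x = 1" and fy: "f y = 1" and f_bound: "\<And>u. \<bar>f u\<bar> \<le> norm u"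
    using segment_on_sphere_norming_functional[OF dim2 seg nz] by blast
  define T where "T = rank_one f ((1 - t) *\<^sub>R x + t *\<^sub>R y)"
  have "norm T \<le> 1" using norm_rank_one_le[OF f_bound] nz unfolding T_def by metis
  moreover have "norm (T x) \<le> norm T * norm x" by (rule norm_blinfun)
  ultimately have nT: "norm T = 1" using fx nz seg by (simp add: T_def)
  then have "attains_norm_at T x" "attains_norm_at T y"
    using fx fy nz seg by (simp_all add: attains_norm_at_def T_def)
  then have "T extreme_point_of cball 0 1"
    using hyp nT seg segment_on_sphere_independent[OF seg nz]
    by (auto simp: extreme_contraction_def)
  moreover have "f \<noteq> 0" using fx by auto
  ultimately show False
    using rank_one_not_extreme_point[OF f_bound _ _ _ seg(3-5)] seg(1,2) by (simp add: T_def)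
qed

end
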